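(* Let $p:\mathbb{R}^d\to\mathbb{R}^m$ be a cubic polynomial. Then there exists $w:\mathbb{Z}^d\to\mathbb{R}^m$ such that $\tilde w=p$ on $\mathbb{R}^d$.
   Context: Fix $d,m\in\mathbb{N}$. A function $\bar\zeta:\mathbb{R}^d\to\mathbb{R}$ is fixed satisfying: (Z1) $\bar\zeta\in W^{1,\infty}(\mathbb{R}^d)$; (Z2) the support of $\bar\zeta$ is compact; (Z3) $\sum_{\xi\in\mathbb{Z}^d}\bar\zeta(x-\xi)(a+b\cdot\xi)=a+b\cdot x$ for all $x\in\mathbb{R}^d$, $a\in\mathbb{R}$, $b\in\mathbb{R}^d$; (Z4) $\bar\zeta(0)=1$ and $\bar\zeta(\xi)=0$ for all $\xi\in\mathbb{Z}^d\setminus\{0\}$. For $w:\mathbb{Z}^d\to\mathbb{R}^m$, $\bar w(x):=\sum_{\xi\in\mathbb{Z}^d}w(\xi)\bar\zeta(x-\xi)$ and $\tilde w:=\bar\zeta\ast\bar w=\sum_\xi w(\xi)(\bar\zeta\ast\bar\zeta)(x-\xi)$. A cubic polynomial means each component is a polynomial of total degree at most $3$. *)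

theory Defs
  imports "HOL-Analysis.Analysis"
begin

definition lat :: "('d::finite \<Rightarrow> int) \<Rightarrow> real^'d" where
  "lat \<xi> = (\<chi> i. of_int (\<xi> i))"

text \<open>Standing assumptions (Z1)-(Z4) on the fixed function zeta. W^{1,inf}(R^d) is
  rendered as: bounded and Lipschitz (the continuous representative).\<close>
definition admissible_zeta :: "(real^'d::finite \<Rightarrow> real) \<Rightarrow> bool" where
  "admissible_zeta \<zeta> \<longleftrightarrow>
     bounded (range \<zeta>) \<and> (\<exists>L. L-lipschitz_on UNIV \<zeta>)
   \<and> compact (closure {x. \<zeta> x \<noteq> 0})
   \<and> (\<forall>x (a::real) (b::real^'d).
         (\<Sum>\<^sub>\<infinity>\<xi>. \<zeta> (x - lat \<xi>) * (a + b \<bullet> lat \<xi>)) = a + b \<bullet> x)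
   \<and> \<zeta> 0 = 1 \<and> (\<forall>\<xi>. \<xi> \<noteq> (\<lambda>_. 0) \<longrightarrow> \<zeta> (lat \<xi>) = 0)"

definition wbar :: "(real^'d::finite \<Rightarrow> real) \<Rightarrow> (('d \<Rightarrow> int) \<Rightarrow> real^'m::finite)
     \<Rightarrow> real^'d \<Rightarrow> real^'m" where
  "wbar \<zeta> w x = (\<Sum>\<^sub>\<infinity>\<xi>. \<zeta> (x - lat \<xi>) *\<^sub>R w \<xi>)"

definition wtilde :: "(real^'d::finite \<Rightarrow> real) \<Rightarrow> (('d \<Rightarrow> int) \<Rightarrow> real^'m::finite)
     \<Rightarrow> real^'d \<Rightarrow> real^'m" where
  "wtilde \<zeta> w x = integral UNIV (\<lambda>y. \<zeta> (x - y) *\<^sub>R wbar \<zeta> w y)"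

definition cubic_poly :: "(real^'d::finite \<Rightarrow> real^'m::finite) \<Rightarrow> bool" where
  "cubic_poly p \<longleftrightarrow> (\<exists>(c0::real^'m) c1 c2 c3. \<forall>x.
     p x = c0 + (\<Sum>i\<in>UNIV. (x$i) *\<^sub>R c1 i)
             + (\<Sum>i\<in>UNIV. \<Sum>j\<in>UNIV. (x$i * x$j) *\<^sub>R c2 i j)
             + (\<Sum>i\<in>UNIV. \<Sum>j\<in>UNIV. \<Sum>k\<in>UNIV. (x$i * x$j * x$k) *\<^sub>R c3 i j k))"

end

theory Submission
  imports Defs
begin

text \<open>Let \<open>T\<close> map lattice data \<open>g\<close> to \<open>\<zeta> * (\<Sum>\<^sub>\<xi> g \<xi> \<zeta> (\<cdot> - \<xi>))\<close>. By (Z3) the inner sum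
  reproduces affine data, and since \<open>\<zeta>\<close> has unit mass and vanishing first moments (both
  consequences of (Z3)) so does the convolution: \<open>T\<close> fixes affine functions. Expanding a
  monomial \<open>m\<close> of degree at most 3 about the evaluation point, the same two moment identities
  show that \<open>T m - m\<close> is affine; the only remainders are convolutions of lattice averages of
  monomials, which a change of variables and (Z3) reduce to moments of \<open>\<zeta>\<close>. Hence the data
  \<open>m - (T m - m)\<close> are mapped to \<open>m\<close>, and linearity of \<open>T\<close> covers every cubic polynomial.\<close>

lemma lat_nth [simp]: "lat \<xi> $ i = of_int (\<xi> i)"
  by (simp add: lat_def)

definition lattice_box :: "int \<Rightarrow> ('d::finite \<Rightarrow> int) set" where
  "lattice_box N = {\<xi>. \<forall>i. \<bar>\<xi> i\<bar> \<le> N}"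

lemma finite_lattice_box: "finite (lattice_box N)"
proof (rule finite_subset)
  show "lattice_box N \<subseteq> Pi\<^sub>E UNIV (\<lambda>_. {-N..N})"
    by (auto simp: lattice_box_def PiE_UNIV_domain abs_le_iff minus_le_iff)
qed (rule finite_PiE, auto)

lemma integrable_bounded_support:
  fixes f :: "'a::euclidean_space \<Rightarrow> 'b::banach"
  assumes "continuous_on UNIV f" "bounded {x. f x \<noteq> 0}"
  shows "f integrable_on UNIV"
proof -
  obtain a where a: "{x. f x \<noteq> 0} \<subseteq> cbox (-a) a"
    using bounded_subset_cbox_symmetric[OF assms(2)] by blast
  show ?thesis
  proof (rule integrable_on_superset)
    show "f integrable_on cbox (-a) a"
      by (rule integrable_continuous[OF continuous_on_subset[OF assms(1)]]) simp
  qed (use a in auto)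
qed

lemma has_integral_affinity_bounded_support:
  fixes f :: "'a::euclidean_space \<Rightarrow> 'b::banach"
  assumes f: "(f has_integral I) UNIV" and supp: "bounded {x. f x \<noteq> 0}" and "m \<noteq> 0"
  shows "((\<lambda>x. f (m *\<^sub>R x + c)) has_integral (1 / \<bar>m\<bar> ^ DIM('a)) *\<^sub>R I) UNIV"
proof -
  obtain a where a: "{x. f x \<noteq> 0} \<subseteq> cbox (-a) a"
    using bounded_subset_cbox_symmetric[OF supp] by blast
  have "(\<lambda>x. if x \<in> cbox (-a) a then f x else 0) = f"
  proof
    fix x show "(if x \<in> cbox (-a) a then f x else 0) = f x"
      using a by (cases "x \<in> cbox (-a) a") auto
  qed
  with f have "((\<lambda>x. if x \<in> cbox (-a) a then f x else 0) has_integral I) UNIV"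
    by simp
  then have "(f has_integral I) (cbox (-a) a)"
    by (simp only: has_integral_restrict_UNIV)
  then have "((\<lambda>x. f (m *\<^sub>R x + c)) has_integral (1 / \<bar>m\<bar> ^ DIM('a)) *\<^sub>R I)
      ((\<lambda>x. (1 / m) *\<^sub>R x + -((1 / m) *\<^sub>R c)) ` cbox (-a) a)"
    using \<open>m \<noteq> 0\<close> by (rule has_integral_affinity)
  then show ?thesis
  proof (rule has_integral_on_superset)
    fix x assume "x \<notin> (\<lambda>x. (1 / m) *\<^sub>R x + -((1 / m) *\<^sub>R c)) ` cbox (-a) a"
    moreover have "x = (1 / m) *\<^sub>R (m *\<^sub>R x + c) + -((1 / m) *\<^sub>R c)"
      using \<open>m \<noteq> 0\<close> by (simp add: scaleR_add_right)
    ultimately have "m *\<^sub>R x + c \<notin> cbox (-a) a"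
      by (metis image_eqI)
    then show "f (m *\<^sub>R x + c) = 0" using a by auto
  qed auto
qed

definition unit_cell :: "(real^'d::finite) set" where
  "unit_cell = {z. \<forall>i. \<lfloor>z $ i\<rfloor> = 0}"

lemma unit_cell_subset_cbox: "unit_cell \<subseteq> cbox 0 (1::real^'d::finite)"
  by (auto simp: unit_cell_def mem_box_cart floor_eq_iff less_imp_le)

lemma abs_component_le_one_if_unit_cell:
  assumes "z \<in> unit_cell"
  shows "\<bar>z $ i\<bar> \<le> 1"
proof -
  have "\<lfloor>z $ i\<rfloor> = 0" using assms by (simp add: unit_cell_def)
  then have "0 \<le> z $ i" "z $ i < 1" by (simp_all add: floor_eq_iff)
  then show ?thesis by linarith
qed

lemma negligible_coordinate_hyperplane: "negligible {x::real^'d::finite. x $ k = c}"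
  using negligible_standard_hyperplane[of "axis k (1::real)" c] by (simp add: cart_eq_inner_axis)

lemma negligible_cbox_diff_unit_cell: "negligible (cbox 0 1 - (unit_cell :: (real^'d::finite) set))"
proof (rule negligible_subset)
  show "negligible (\<Union>k. {x::real^'d. x $ k = 1})"
    by (rule negligible_Union) (auto intro: negligible_coordinate_hyperplane)
  show "cbox 0 1 - unit_cell \<subseteq> (\<Union>k. {x::real^'d. x $ k = 1})"
  proof
    fix x :: "real^'d" assume "x \<in> cbox 0 1 - unit_cell"
    then obtain k where "0 \<le> x $ k" "x $ k \<le> 1" "\<lfloor>x $ k\<rfloor> \<noteq> 0"
      by (auto simp: unit_cell_def mem_box_cart)
    then have "x $ k = 1" by (cases "x $ k < 1") (auto simp: floor_eq_iff)
    then show "x \<in> (\<Union>k. {x::real^'d. x $ k = 1})" by auto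
  qed
qed

lemma has_integral_unit_cell:
  fixes g :: "real^'d::finite \<Rightarrow> 'b::banach"
  assumes "(g has_integral I) (cbox 0 1)"
  shows "((\<lambda>z. if z \<in> unit_cell then g z else 0) has_integral I) UNIV"
proof -
  have "(g has_integral I) unit_cell"
  proof (subst has_integral_spike_set_eq)
    show "negligible {x \<in> unit_cell - cbox 0 1. g x \<noteq> 0}"
      by (rule negligible_subset[of "{}"]) (use unit_cell_subset_cbox in auto)
    show "negligible {x \<in> cbox 0 1 - unit_cell. g x \<noteq> 0}"
      by (rule negligible_subset[OF negligible_cbox_diff_unit_cell]) auto
  qed (rule assms)
  then show ?thesis by (simp only: has_integral_restrict_UNIV)
qed

lemma lattice_translate_mem_unit_cell: "y + lat \<xi> \<in> unit_cell \<longleftrightarrow> \<xi> = (\<lambda>i. - \<lfloor>y $ i\<rfloor>)"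
  by (auto simp: unit_cell_def fun_eq_iff floor_add_int[symmetric] algebra_simps)
    (metis add.commute add_eq_0_iff2)

text \<open>Both the lattice average \<open>f \<mapsto> \<Sum>\<^sub>\<xi> \<zeta> (u - \<xi>) f (u - \<xi>)\<close> and the kernel integral
  \<open>f \<mapsto> \<integral> \<zeta> f\<close> are instances; the latter is linear only on integrable, e.g. continuous, functions.\<close>
locale centred_mean =
  fixes L :: "(real^'d::finite \<Rightarrow> real) \<Rightarrow> real"
  assumes add: "continuous_on UNIV f \<Longrightarrow> continuous_on UNIV g \<Longrightarrow> L (\<lambda>z. f z + g z) = L f + L g"
    and mult: "L (\<lambda>z. c * f z) = c * L f"
    and unit_mass: "L (\<lambda>_. 1) = 1"
    and centred: "L (\<lambda>z. b \<bullet> z) = 0"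
begin

lemma diff:
  assumes "continuous_on UNIV f" "continuous_on UNIV g"
  shows "L (\<lambda>z. f z - g z) = L f - L g"
proof -
  have "L (\<lambda>z. f z + (-1) * g z) = L f + L (\<lambda>z. (-1) * g z)"
    by (rule add) (intro assms continuous_intros)+
  then show ?thesis unfolding mult by simp
qed

lemma affine: "L (\<lambda>z. a + b \<bullet> z) = a"
proof -
  have "L (\<lambda>z. a * 1 + b \<bullet> z) = L (\<lambda>_. a * 1) + L (\<lambda>z. b \<bullet> z)"
    by (rule add) (intro continuous_intros)+
  then show ?thesis unfolding mult unit_mass centred by simp
qed

lemma quadratic_shift: "L (\<lambda>z. (u - z) $ i * (u - z) $ j) = u $ i * u $ j + L (\<lambda>z. z $ i * z $ j)"
proof -
  define b where "b = - (u $ i *\<^sub>R axis j (1::real) + u $ j *\<^sub>R axis i 1)"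
  have "(\<lambda>z. (u - z) $ i * (u - z) $ j) = (\<lambda>z. (u $ i * u $ j + b \<bullet> z) + z $ i * z $ j)"
    by (rule ext) (simp add: b_def inner_add_left inner_axis' algebra_simps)
  then show ?thesis
    by (simp add: add affine continuous_intros)
qed

lemma cubic_shift:
  "L (\<lambda>z. (u - z) $ i * (u - z) $ j * (u - z) $ k) = u $ i * u $ j * u $ k
     + u $ i * L (\<lambda>z. z $ j * z $ k) + u $ j * L (\<lambda>z. z $ i * z $ k)
     + u $ k * L (\<lambda>z. z $ i * z $ j) - L (\<lambda>z. z $ i * z $ j * z $ k)"
proof -
  define b where "b = - ((u $ i * u $ j) *\<^sub>R axis k (1::real) + (u $ i * u $ k) *\<^sub>R axis j 1
    + (u $ j * u $ k) *\<^sub>R axis i 1)"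
  have "(\<lambda>z. (u - z) $ i * (u - z) $ j * (u - z) $ k) = (\<lambda>z. (u $ i * u $ j * u $ k + b \<bullet> z)
      + u $ i * (z $ j * z $ k) + u $ j * (z $ i * z $ k) + u $ k * (z $ i * z $ j) - z $ i * z $ j * z $ k)"
    by (rule ext) (simp add: b_def inner_add_left inner_axis' algebra_simps)
  then show ?thesis
    by (simp add: add diff mult affine continuous_intros)
qed

end

text \<open>The properties of \<open>\<zeta>\<close> that the argument uses: (Z1) only through continuity, (Z2) as a
  support radius \<open>R\<close>, and (Z3).\<close>
locale lattice_kernel =
  fixes \<zeta> :: "real^'d::finite \<Rightarrow> real" and R :: real
  assumes continuous: "continuous_on UNIV \<zeta>"
    and support: "\<zeta> x \<noteq> 0 \<Longrightarrow> norm x \<le> R"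
    and reproduces_affine: "(\<Sum>\<^sub>\<infinity>\<xi>. \<zeta> (x - lat \<xi>) * (a + b \<bullet> lat \<xi>)) = a + b \<bullet> x"
begin

lemma continuous_on_kernel [continuous_intros]: "continuous_on S f \<Longrightarrow> continuous_on S (\<lambda>x. \<zeta> (f x))"
  by (rule continuous_on_compose2[OF continuous]) auto

lemma mem_lattice_box_if_kernel_nonzero:
  assumes "\<And>i. \<bar>u $ i\<bar> \<le> r" and "\<zeta> (u - lat \<xi>) \<noteq> 0"
  shows "\<xi> \<in> lattice_box \<lceil>r + R\<rceil>"
proof -
  have "\<bar>\<xi> i\<bar> \<le> \<lceil>r + R\<rceil>" for i
  proof -
    have "\<bar>(u - lat \<xi>) $ i\<bar> \<le> R"
      using support[OF assms(2)] component_le_norm_cart[of "u - lat \<xi>" i] by linarith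
    with assms(1)[of i] have "\<bar>real_of_int (\<xi> i)\<bar> \<le> r + R" by simp
    then show ?thesis by linarith
  qed
  then show ?thesis by (simp add: lattice_box_def)
qed

lemma lattice_sum_eq_sum:
  fixes h :: "('d \<Rightarrow> int) \<Rightarrow> 'b::real_normed_vector"
  assumes "\<And>i. \<bar>u $ i\<bar> \<le> r"
  shows "(\<Sum>\<^sub>\<infinity>\<xi>. \<zeta> (u - lat \<xi>) *\<^sub>R h \<xi>) = (\<Sum>\<xi>\<in>lattice_box \<lceil>r + R\<rceil>. \<zeta> (u - lat \<xi>) *\<^sub>R h \<xi>)"
proof -
  have "(\<Sum>\<^sub>\<infinity>\<xi>. \<zeta> (u - lat \<xi>) *\<^sub>R h \<xi>) = (\<Sum>\<^sub>\<infinity>\<xi>\<in>lattice_box \<lceil>r + R\<rceil>. \<zeta> (u - lat \<xi>) *\<^sub>R h \<xi>)"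
    by (rule infsum_cong_neutral) (use mem_lattice_box_if_kernel_nonzero[OF assms] in auto)
  then show ?thesis by (simp add: finite_lattice_box)
qed

lemma lattice_sum_eq_sum_norm:
  fixes h :: "('d \<Rightarrow> int) \<Rightarrow> 'b::real_normed_vector"
  assumes "norm u \<le> r"
  shows "(\<Sum>\<^sub>\<infinity>\<xi>. \<zeta> (u - lat \<xi>) *\<^sub>R h \<xi>) = (\<Sum>\<xi>\<in>lattice_box \<lceil>r + R\<rceil>. \<zeta> (u - lat \<xi>) *\<^sub>R h \<xi>)"
  using assms component_le_norm_cart order_trans by (blast intro: lattice_sum_eq_sum)

lemma lattice_summable:
  fixes h :: "('d \<Rightarrow> int) \<Rightarrow> 'b::real_normed_vector"
  shows "(\<lambda>\<xi>. \<zeta> (u - lat \<xi>) *\<^sub>R h \<xi>) summable_on UNIV"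
proof (rule finite_nonzero_values_imp_summable_on)
  have "{\<xi> \<in> UNIV. \<zeta> (u - lat \<xi>) *\<^sub>R h \<xi> \<noteq> 0} \<subseteq> lattice_box \<lceil>norm u + R\<rceil>"
  proof
    fix \<xi> assume "\<xi> \<in> {\<xi> \<in> UNIV. \<zeta> (u - lat \<xi>) *\<^sub>R h \<xi> \<noteq> 0}"
    then have "\<zeta> (u - lat \<xi>) \<noteq> 0" by auto
    then show "\<xi> \<in> lattice_box \<lceil>norm u + R\<rceil>"
      by (rule mem_lattice_box_if_kernel_nonzero[OF component_le_norm_cart])
  qed
  then show "finite {\<xi> \<in> UNIV. \<zeta> (u - lat \<xi>) *\<^sub>R h \<xi> \<noteq> 0}"
    by (rule finite_subset) (rule finite_lattice_box)
qed

lemma continuous_on_lattice_sum: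
  fixes h :: "('d \<Rightarrow> int) \<Rightarrow> real^'d \<Rightarrow> 'b::real_normed_vector"
  assumes "\<And>\<xi>. continuous_on UNIV (h \<xi>)"
  shows "continuous_on UNIV (\<lambda>u. \<Sum>\<^sub>\<infinity>\<xi>. \<zeta> (u - lat \<xi>) *\<^sub>R h \<xi> u)"
proof -
  have "isCont (\<lambda>u. \<Sum>\<^sub>\<infinity>\<xi>. \<zeta> (u - lat \<xi>) *\<^sub>R h \<xi> u) u\<^sub>0" for u\<^sub>0
  proof -
    define F where "F = (lattice_box \<lceil>(norm u\<^sub>0 + 1) + R\<rceil> :: ('d \<Rightarrow> int) set)"
    have "continuous_on (ball u\<^sub>0 1) (\<lambda>u. \<Sum>\<xi>\<in>F. \<zeta> (u - lat \<xi>) *\<^sub>R h \<xi> u)"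
      by (intro continuous_intros continuous_on_subset[OF assms]) auto
    moreover have "(\<Sum>\<xi>\<in>F. \<zeta> (u - lat \<xi>) *\<^sub>R h \<xi> u) = (\<Sum>\<^sub>\<infinity>\<xi>. \<zeta> (u - lat \<xi>) *\<^sub>R h \<xi> u)"
      if "u \<in> ball u\<^sub>0 1" for u
    proof -
      have "norm u \<le> norm u\<^sub>0 + 1"
        using that norm_triangle_ineq2[of u u\<^sub>0] by (simp add: dist_norm norm_minus_commute)
      then show ?thesis unfolding F_def by (rule lattice_sum_eq_sum_norm[symmetric])
    qed
    ultimately have "continuous_on (ball u\<^sub>0 1) (\<lambda>u. \<Sum>\<^sub>\<infinity>\<xi>. \<zeta> (u - lat \<xi>) *\<^sub>R h \<xi> u)"
      by (rule continuous_on_eq)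
    then show ?thesis by (simp add: continuous_on_eq_continuous_at)
  qed
  then show ?thesis by (simp add: continuous_at_imp_continuous_on)
qed

lemma integrable_kernel_mult:
  assumes "continuous_on UNIV f"
  shows "(\<lambda>v. \<zeta> v * f v) integrable_on UNIV"
proof (rule integrable_bounded_support)
  show "bounded {v. \<zeta> v * f v \<noteq> 0}"
    by (rule bounded_subset[OF bounded_cball[of 0 R]]) (auto dest: support)
qed (intro continuous_intros assms)

lemma bounded_shifted_kernel_support: "bounded {y. \<zeta> (x - y) \<noteq> 0}"
  by (rule bounded_subset[OF bounded_cball[of x R]]) (auto simp: dist_norm dest: support)

lemma integrable_shifted_kernel_scaleR:
  fixes f :: "real^'d \<Rightarrow> 'b::banach"
  assumes "continuous_on UNIV f"
  shows "(\<lambda>y. \<zeta> (x - y) *\<^sub>R f y) integrable_on UNIV"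
proof (rule integrable_bounded_support)
  show "bounded {y. \<zeta> (x - y) *\<^sub>R f y \<noteq> 0}"
    by (rule bounded_subset[OF bounded_shifted_kernel_support]) auto
qed (intro continuous_intros assms)

lemma integral_shifted_kernel_scaleR:
  fixes f :: "real^'d \<Rightarrow> 'b::banach"
  assumes "continuous_on UNIV f"
  shows "integral UNIV (\<lambda>y. \<zeta> (x - y) *\<^sub>R f y) = integral UNIV (\<lambda>v. \<zeta> v *\<^sub>R f (x - v))"
proof -
  have "((\<lambda>v. \<zeta> (x - ((-1) *\<^sub>R v + x)) *\<^sub>R f ((-1) *\<^sub>R v + x))
      has_integral (1 / \<bar>-1\<bar> ^ DIM(real^'d)) *\<^sub>R integral UNIV (\<lambda>y. \<zeta> (x - y) *\<^sub>R f y)) UNIV"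
  proof (rule has_integral_affinity_bounded_support)
    show "bounded {y. \<zeta> (x - y) *\<^sub>R f y \<noteq> 0}"
      by (rule bounded_subset[OF bounded_shifted_kernel_support]) auto
  qed (use integrable_shifted_kernel_scaleR[OF assms] in auto)
  then show ?thesis by (simp add: integral_unique)
qed

definition lattice_mean :: "real^'d \<Rightarrow> (real^'d \<Rightarrow> real) \<Rightarrow> real" where
  "lattice_mean u f = (\<Sum>\<^sub>\<infinity>\<xi>. \<zeta> (u - lat \<xi>) * f (u - lat \<xi>))"

lemma centred_mean_lattice_mean: "centred_mean (lattice_mean u)"
proof
  fix f g :: "real^'d \<Rightarrow> real" and c :: real and b :: "real^'d"
  have summable: "(\<lambda>\<xi>. \<zeta> (u - lat \<xi>) * h \<xi>) summable_on UNIV" for h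
    using lattice_summable[of u h] by simp
  show "lattice_mean u (\<lambda>z. f z + g z) = lattice_mean u f + lattice_mean u g"
    unfolding lattice_mean_def distrib_left by (rule infsum_add) (rule summable)+
  show "lattice_mean u (\<lambda>z. c * f z) = c * lattice_mean u f"
    unfolding lattice_mean_def mult.left_commute[of _ c] by (rule infsum_cmult_right) (rule summable)
  show "lattice_mean u (\<lambda>_. 1) = 1"
    using reproduces_affine[of u 1 0] by (simp add: lattice_mean_def)
  show "lattice_mean u (\<lambda>z. b \<bullet> z) = 0"
    using reproduces_affine[of u "b \<bullet> u" "- b"] by (simp add: lattice_mean_def inner_diff_right)
qed

lemma continuous_on_lattice_mean [continuous_intros]:
  assumes "continuous_on S f" "continuous_on UNIV Q"
  shows "continuous_on S (\<lambda>x. lattice_mean (f x) Q)"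
proof -
  have "continuous_on UNIV (\<lambda>u. \<Sum>\<^sub>\<infinity>\<xi>. \<zeta> (u - lat \<xi>) *\<^sub>R Q (u - lat \<xi>))"
    by (rule continuous_on_lattice_sum) (intro continuous_intros continuous_on_compose2[OF assms(2)]; simp)
  then have "continuous_on UNIV (\<lambda>u. lattice_mean u Q)"
    by (simp add: lattice_mean_def)
  then show ?thesis
    by (rule continuous_on_compose2[OF _ assms(1)]) simp
qed

definition kernel_mean :: "(real^'d \<Rightarrow> real) \<Rightarrow> real" where
  "kernel_mean f = integral UNIV (\<lambda>v. \<zeta> v * f v)"

lemma norm_diff_le_if_kernel_nonzero: "\<zeta> v \<noteq> 0 \<Longrightarrow> norm (x - v) \<le> norm x + R"
  using support norm_triangle_ineq4[of x v] by force

text \<open>Substituting \<open>v = x - lat \<xi> - w\<close> in the \<open>\<xi>\<close>-th term of the lattice average.\<close>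
lemma kernel_mean_lattice_mean_eq_sum:
  assumes Q: "continuous_on UNIV Q"
  shows "kernel_mean (\<lambda>v. (a + b \<bullet> (x - v)) * lattice_mean (x - v) Q)
    = (\<Sum>\<xi>\<in>lattice_box \<lceil>(norm x + R) + R\<rceil>.
        integral UNIV (\<lambda>w. \<zeta> w * (Q w * (\<zeta> (x - w - lat \<xi>) * (a + b \<bullet> (w + lat \<xi>))))))"
proof -
  define F where "F = (lattice_box \<lceil>(norm x + R) + R\<rceil> :: ('d \<Rightarrow> int) set)"
  define f where "f \<xi> v = \<zeta> v * (a + b \<bullet> (x - v)) * Q (x - lat \<xi> - v)" for \<xi> v
  have continuous_f: "continuous_on UNIV (f \<xi>)" for \<xi>
    unfolding f_def[abs_def]
    by (intro continuous_intros continuous_on_compose2[OF Q]) simp_all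
  have "\<zeta> v * ((a + b \<bullet> (x - v)) * lattice_mean (x - v) Q)
      = (\<Sum>\<xi>\<in>F. \<zeta> (x - lat \<xi> - v) * f \<xi> v)" for v
  proof (cases "\<zeta> v = 0")
    case False
    from lattice_sum_eq_sum_norm[OF norm_diff_le_if_kernel_nonzero[OF False, of x],
        of "\<lambda>\<xi>. Q (x - v - lat \<xi>)"]
    show ?thesis
      by (simp add: lattice_mean_def F_def f_def sum_distrib_left algebra_simps)
  qed (simp add: f_def)
  then have "kernel_mean (\<lambda>v. (a + b \<bullet> (x - v)) * lattice_mean (x - v) Q)
      = integral UNIV (\<lambda>v. \<Sum>\<xi>\<in>F. \<zeta> (x - lat \<xi> - v) * f \<xi> v)"
    by (simp add: kernel_mean_def)
  also have "\<dots> = (\<Sum>\<xi>\<in>F. integral UNIV (\<lambda>v. \<zeta> (x - lat \<xi> - v) * f \<xi> v))"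
    using integrable_shifted_kernel_scaleR[OF continuous_f]
    by (intro integral_sum) (simp_all add: F_def finite_lattice_box)
  also have "\<dots> = (\<Sum>\<xi>\<in>F. integral UNIV (\<lambda>w. \<zeta> w * f \<xi> (x - lat \<xi> - w)))"
    using integral_shifted_kernel_scaleR[OF continuous_f] by simp
  also have "\<dots> = (\<Sum>\<xi>\<in>F.
      integral UNIV (\<lambda>w. \<zeta> w * (Q w * (\<zeta> (x - w - lat \<xi>) * (a + b \<bullet> (w + lat \<xi>))))))"
    by (simp add: f_def algebra_simps)
  finally show ?thesis
    unfolding F_def .
qed

text \<open>After the substitution, the sum over \<open>\<xi>\<close> is an instance of (Z3).\<close>
lemma kernel_mean_lattice_mean:
  assumes Q: "continuous_on UNIV Q"
  shows "kernel_mean (\<lambda>v. (a + b \<bullet> (x - v)) * lattice_mean (x - v) Q) = (a + b \<bullet> x) * kernel_mean Q"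
proof -
  define F where "F = (lattice_box \<lceil>(norm x + R) + R\<rceil> :: ('d \<Rightarrow> int) set)"
  define g where "g \<xi> w = \<zeta> w * (Q w * (\<zeta> (x - w - lat \<xi>) * (a + b \<bullet> (w + lat \<xi>))))" for \<xi> w
  have "kernel_mean (\<lambda>v. (a + b \<bullet> (x - v)) * lattice_mean (x - v) Q) = (\<Sum>\<xi>\<in>F. integral UNIV (g \<xi>))"
    unfolding kernel_mean_lattice_mean_eq_sum[OF Q] F_def g_def ..
  also have "\<dots> = integral UNIV (\<lambda>w. \<Sum>\<xi>\<in>F. g \<xi> w)"
  proof (rule integral_sum[symmetric])
    show "g \<xi> integrable_on UNIV" for \<xi>
      unfolding g_def[abs_def]
      by (intro integrable_kernel_mult continuous_intros continuous_on_compose2[OF Q]) simp_all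
  qed (simp add: F_def finite_lattice_box)
  also have "\<dots> = integral UNIV (\<lambda>w. (a + b \<bullet> x) * (\<zeta> w * Q w))"
  proof (rule arg_cong[of _ _ "integral UNIV"], rule ext)
    fix w
    show "(\<Sum>\<xi>\<in>F. g \<xi> w) = (a + b \<bullet> x) * (\<zeta> w * Q w)"
    proof (cases "\<zeta> w = 0")
      case False
      have "(\<Sum>\<xi>\<in>F. \<zeta> (x - w - lat \<xi>) * ((a + b \<bullet> w) + b \<bullet> lat \<xi>)) = a + b \<bullet> x"
        using lattice_sum_eq_sum_norm[OF norm_diff_le_if_kernel_nonzero[OF False, of x],
            of "\<lambda>\<xi>. (a + b \<bullet> w) + b \<bullet> lat \<xi>"]
          reproduces_affine[of "x - w" "a + b \<bullet> w" b]
        by (simp add: F_def inner_diff_right)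
      then show ?thesis
        by (simp add: g_def inner_add_right add.assoc sum_distrib_left[symmetric] mult.commute mult.left_commute)
    qed (simp add: g_def)
  qed
  finally show ?thesis
    by (simp add: kernel_mean_def)
qed

lemma kernel_mean_lattice_mean_unweighted:
  "continuous_on UNIV Q \<Longrightarrow> kernel_mean (\<lambda>v. lattice_mean (x - v) Q) = kernel_mean Q"
  using kernel_mean_lattice_mean[of Q 1 0 x] by simp

lemma kernel_mean_coordinate_lattice_mean:
  "continuous_on UNIV Q \<Longrightarrow> kernel_mean (\<lambda>v. (x - v) $ l * lattice_mean (x - v) Q) = x $ l * kernel_mean Q"
  using kernel_mean_lattice_mean[of Q 0 "axis l 1" x] by (simp add: inner_axis')

definition cell_piece :: "('d \<Rightarrow> int) \<Rightarrow> real^'d \<Rightarrow> real" where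
  "cell_piece \<xi> z = (if z \<in> unit_cell then \<zeta> (z - lat \<xi>) else 0)"

lemma has_integral_cell_piece:
  "(cell_piece \<xi> has_integral integral (cbox 0 1) (\<lambda>z. \<zeta> (z - lat \<xi>))) UNIV"
  unfolding cell_piece_def[abs_def]
  by (intro has_integral_unit_cell integrable_integral integrable_continuous continuous_intros)

lemma cell_piece_translate:
  "cell_piece \<xi> (y + lat \<xi>) = (if \<xi> = (\<lambda>i. - \<lfloor>y $ i\<rfloor>) then \<zeta> y else 0)"
  by (simp add: cell_piece_def lattice_translate_mem_unit_cell)

lemma kernel_eq_sum_cell_pieces: "\<zeta> y = (\<Sum>\<xi>\<in>lattice_box \<lceil>1 + R\<rceil>. cell_piece \<xi> (y + lat \<xi>))"
proof (cases "\<zeta> y = 0")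
  case False
  define \<xi>\<^sub>y where "\<xi>\<^sub>y = (\<lambda>i. - \<lfloor>y $ i\<rfloor>)"
  have "y + lat \<xi>\<^sub>y \<in> unit_cell"
    by (simp add: \<xi>\<^sub>y_def lattice_translate_mem_unit_cell)
  moreover have "\<zeta> ((y + lat \<xi>\<^sub>y) - lat \<xi>\<^sub>y) \<noteq> 0"
    using False by simp
  ultimately have "\<xi>\<^sub>y \<in> lattice_box \<lceil>1 + R\<rceil>"
    by (rule mem_lattice_box_if_kernel_nonzero[OF abs_component_le_one_if_unit_cell])
  then show ?thesis
    by (simp add: cell_piece_translate sum.delta[OF finite_lattice_box] \<xi>\<^sub>y_def[symmetric])
qed (auto simp: cell_piece_translate intro!: sum.neutral)

lemma sum_cell_pieces:
  "(\<Sum>\<xi>\<in>lattice_box \<lceil>1 + R\<rceil>. cell_piece \<xi> z) = (if z \<in> unit_cell then 1 else 0)"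
proof (cases "z \<in> unit_cell")
  case True
  have "(\<Sum>\<xi>\<in>lattice_box \<lceil>1 + R\<rceil>. \<zeta> (z - lat \<xi>) * 1) = 1"
    using lattice_sum_eq_sum[OF abs_component_le_one_if_unit_cell[OF True], of "\<lambda>_. 1::real"]
      reproduces_affine[of z 1 0] by simp
  with True show ?thesis by (simp add: cell_piece_def)
qed (simp add: cell_piece_def)

text \<open>Periodisation: \<open>\<zeta>\<close> is the sum of the translates of its cell pieces, whose
  untranslated sum is the indicator of the unit cell.\<close>
lemma integral_kernel: "integral UNIV \<zeta> = 1"
proof -
  define F where "F = (lattice_box \<lceil>1 + R\<rceil> :: ('d \<Rightarrow> int) set)"
  have finite_F: "finite F" by (simp add: F_def finite_lattice_box)
  have "((\<lambda>y. \<Sum>\<xi>\<in>F. cell_piece \<xi> (1 *\<^sub>R y + lat \<xi>)) has_integral (\<Sum>\<xi>\<in>F. integral UNIV (cell_piece \<xi>))) UNIV"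
  proof (rule has_integral_sum[OF finite_F])
    fix \<xi>
    have "bounded {z. cell_piece \<xi> z \<noteq> 0}"
      by (rule bounded_subset[OF bounded_cbox]) (use unit_cell_subset_cbox in \<open>auto simp: cell_piece_def\<close>)
    then show "((\<lambda>y. cell_piece \<xi> (1 *\<^sub>R y + lat \<xi>)) has_integral integral UNIV (cell_piece \<xi>)) UNIV"
      using has_integral_affinity_bounded_support[OF integrable_integral, of "cell_piece \<xi>" 1 "lat \<xi>"]
        has_integral_cell_piece by auto
  qed
  then have "(\<zeta> has_integral (\<Sum>\<xi>\<in>F. integral UNIV (cell_piece \<xi>))) UNIV"
    unfolding F_def scaleR_one kernel_eq_sum_cell_pieces[symmetric] .
  moreover have "((\<lambda>z. \<Sum>\<xi>\<in>F. cell_piece \<xi> z) has_integral (\<Sum>\<xi>\<in>F. integral UNIV (cell_piece \<xi>))) UNIV"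
    using has_integral_cell_piece by (intro has_integral_sum[OF finite_F]) (auto simp: integral_unique)
  moreover have "((\<lambda>z. \<Sum>\<xi>\<in>F. cell_piece \<xi> z) has_integral 1) UNIV"
  proof -
    have "(0::real^'d) \<in> cbox 0 1" by (simp add: mem_box_cart)
    then have "((\<lambda>_. 1::real) has_integral 1) (cbox 0 (1::real^'d))"
      using has_integral_const[of "1::real" "0::real^'d" 1]
      by (subst (asm) content_cbox_cart) auto
    then show ?thesis
      unfolding F_def sum_cell_pieces by (rule has_integral_unit_cell)
  qed
  ultimately show ?thesis
    by (metis has_integral_unique integral_unique)
qed

lemma centred_mean_kernel_mean: "centred_mean kernel_mean"
proof
  fix f g :: "real^'d \<Rightarrow> real" and c :: real and b :: "real^'d"
  show "kernel_mean (\<lambda>z. f z + g z) = kernel_mean f + kernel_mean g"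
    if "continuous_on UNIV f" "continuous_on UNIV g"
    unfolding kernel_mean_def distrib_left
    by (rule integral_add) (intro integrable_kernel_mult that)+
  show "kernel_mean (\<lambda>z. c * f z) = c * kernel_mean f"
    by (simp add: kernel_mean_def mult.left_commute[of _ c])
  show "kernel_mean (\<lambda>_. 1) = 1"
    using integral_kernel by (simp add: kernel_mean_def)
  txt \<open>The first moments vanish by the convolution identity for the constant \<open>1\<close> at \<open>x = 0\<close>.\<close>
  have "kernel_mean (\<lambda>v. (0 + b \<bullet> (0 - v)) * lattice_mean (0 - v) (\<lambda>_. 1)) = 0"
    using kernel_mean_lattice_mean[of "\<lambda>_. 1" 0 b 0] by simp
  then have "kernel_mean (\<lambda>v. (-1) * (b \<bullet> v)) = 0"
    using centred_mean.unit_mass[OF centred_mean_lattice_mean] by simp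
  then show "kernel_mean (\<lambda>z. b \<bullet> z) = 0"
    by (simp add: kernel_mean_def mult.left_commute[of _ "-1"])
qed

text \<open>Scalar versions of \<open>wbar\<close> and \<open>wtilde\<close> for lattice data sampled from \<open>g\<close>.\<close>
definition quasi_interp :: "(real^'d \<Rightarrow> real) \<Rightarrow> real^'d \<Rightarrow> real" where
  "quasi_interp g u = (\<Sum>\<^sub>\<infinity>\<xi>. \<zeta> (u - lat \<xi>) * g (lat \<xi>))"

definition smoothing :: "(real^'d \<Rightarrow> real) \<Rightarrow> real^'d \<Rightarrow> real" where
  "smoothing g x = integral UNIV (\<lambda>y. \<zeta> (x - y) * quasi_interp g y)"

lemma quasi_interp_eq_lattice_mean: "quasi_interp g u = lattice_mean u (\<lambda>z. g (u - z))"
  by (simp add: quasi_interp_def lattice_mean_def)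

lemma continuous_on_quasi_interp: "continuous_on UNIV (quasi_interp g)"
  using continuous_on_lattice_sum[of "\<lambda>\<xi> _. g (lat \<xi>)"]
  by (simp add: quasi_interp_def[abs_def])

lemma smoothing_eq_kernel_mean: "smoothing g x = kernel_mean (\<lambda>v. quasi_interp g (x - v))"
  using integral_shifted_kernel_scaleR[of "quasi_interp g" x, OF continuous_on_quasi_interp]
  by (simp add: smoothing_def kernel_mean_def)

lemma smoothing_diff: "smoothing (\<lambda>y. g y - h y) x = smoothing g x - smoothing h x"
proof -
  have integrable: "(\<lambda>y. \<zeta> (x - y) * quasi_interp f y) integrable_on UNIV" for f
    using integrable_shifted_kernel_scaleR[of "quasi_interp f" x, OF continuous_on_quasi_interp] by simp
  have quasi_interp_diff: "quasi_interp (\<lambda>y. g y - h y) u = quasi_interp g u - quasi_interp h u" for u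
    using lattice_sum_eq_sum_norm[OF order_refl, of u "\<lambda>\<xi>. g (lat \<xi>) - h (lat \<xi>)"]
      lattice_sum_eq_sum_norm[OF order_refl, of u "\<lambda>\<xi>. g (lat \<xi>)"]
      lattice_sum_eq_sum_norm[OF order_refl, of u "\<lambda>\<xi>. h (lat \<xi>)"]
    by (simp add: quasi_interp_def right_diff_distrib sum_subtractf)
  show ?thesis
    unfolding smoothing_def quasi_interp_diff right_diff_distrib by (rule integral_diff) (rule integrable)+
qed

lemma smoothing_affine: "smoothing (\<lambda>y. a + b \<bullet> y) x = a + b \<bullet> x"
proof -
  have "smoothing (\<lambda>y. a + b \<bullet> y) x = kernel_mean (\<lambda>v. a + b \<bullet> (x - v))"
    unfolding smoothing_eq_kernel_mean quasi_interp_def reproduces_affine ..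
  then show ?thesis
    using centred_mean.affine[OF centred_mean_kernel_mean, of "a + b \<bullet> x" "- b"]
    by (simp add: inner_diff_right add_diff_eq)
qed

lemma smoothing_quadratic:
  "smoothing (\<lambda>y. y $ i * y $ j) x = x $ i * x $ j + 2 * kernel_mean (\<lambda>z. z $ i * z $ j)"
proof -
  interpret K: centred_mean kernel_mean by (rule centred_mean_kernel_mean)
  let ?m = "\<lambda>z. z $ i * z $ j"
  have "smoothing ?m x = kernel_mean (\<lambda>v. (x - v) $ i * (x - v) $ j + lattice_mean (x - v) ?m)"
    unfolding smoothing_eq_kernel_mean quasi_interp_eq_lattice_mean
      centred_mean.quadratic_shift[OF centred_mean_lattice_mean] ..
  also have "\<dots> = kernel_mean (\<lambda>v. (x - v) $ i * (x - v) $ j) + kernel_mean (\<lambda>v. lattice_mean (x - v) ?m)"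
    by (rule K.add) (intro continuous_intros)+
  also have "\<dots> = x $ i * x $ j + 2 * kernel_mean ?m"
    unfolding K.quadratic_shift by (simp add: kernel_mean_lattice_mean_unweighted continuous_intros)
  finally show ?thesis .
qed

lemma smoothing_cubic:
  "smoothing (\<lambda>y. y $ i * y $ j * y $ k) x = x $ i * x $ j * x $ k
     + 2 * (x $ i * kernel_mean (\<lambda>z. z $ j * z $ k) + x $ j * kernel_mean (\<lambda>z. z $ i * z $ k)
       + x $ k * kernel_mean (\<lambda>z. z $ i * z $ j)) - 2 * kernel_mean (\<lambda>z. z $ i * z $ j * z $ k)"
proof -
  interpret K: centred_mean kernel_mean by (rule centred_mean_kernel_mean)
  let ?m = "\<lambda>z::real^'d. z $ i * z $ j * z $ k"
  let ?m\<^sub>i = "\<lambda>z. z $ j * z $ k" and ?m\<^sub>j = "\<lambda>z. z $ i * z $ k" and ?m\<^sub>k = "\<lambda>z. z $ i * z $ j"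
  have continuous_product: "continuous_on UNIV (\<lambda>z::real^'d. z $ a * z $ b)" for a b
    by (intro continuous_intros)
  have continuous_triple: "continuous_on UNIV ?m"
    by (intro continuous_intros)
  have "smoothing ?m x = kernel_mean (\<lambda>v. (x - v) $ i * (x - v) $ j * (x - v) $ k
      + (x - v) $ i * lattice_mean (x - v) ?m\<^sub>i + (x - v) $ j * lattice_mean (x - v) ?m\<^sub>j
      + (x - v) $ k * lattice_mean (x - v) ?m\<^sub>k - lattice_mean (x - v) ?m)"
    unfolding smoothing_eq_kernel_mean quasi_interp_eq_lattice_mean
      centred_mean.cubic_shift[OF centred_mean_lattice_mean] ..
  also have "\<dots> = kernel_mean (\<lambda>v. (x - v) $ i * (x - v) $ j * (x - v) $ k)
      + kernel_mean (\<lambda>v. (x - v) $ i * lattice_mean (x - v) ?m\<^sub>i)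
      + kernel_mean (\<lambda>v. (x - v) $ j * lattice_mean (x - v) ?m\<^sub>j)
      + kernel_mean (\<lambda>v. (x - v) $ k * lattice_mean (x - v) ?m\<^sub>k)
      - kernel_mean (\<lambda>v. lattice_mean (x - v) ?m)"
    by (simp add: K.add K.diff continuous_intros)
  also have "\<dots> = x $ i * x $ j * x $ k
     + 2 * (x $ i * kernel_mean ?m\<^sub>i + x $ j * kernel_mean ?m\<^sub>j + x $ k * kernel_mean ?m\<^sub>k)
     - 2 * kernel_mean ?m"
    unfolding K.cubic_shift kernel_mean_coordinate_lattice_mean[OF continuous_product]
      kernel_mean_lattice_mean_unweighted[OF continuous_triple]
    by (simp add: algebra_simps)
  finally show ?thesis .
qed

lemma wtilde_scaleR: "wtilde \<zeta> (\<lambda>\<xi>. g (lat \<xi>) *\<^sub>R c) x = smoothing g x *\<^sub>R c"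
proof -
  have "wbar \<zeta> (\<lambda>\<xi>. g (lat \<xi>) *\<^sub>R c) y = quasi_interp g y *\<^sub>R c" for y
    using infsum_scaleR_left[OF lattice_summable, of y "\<lambda>\<xi>. g (lat \<xi>)" c]
    by (simp add: wbar_def quasi_interp_def)
  moreover have "((\<lambda>y. (\<zeta> (x - y) * quasi_interp g y) *\<^sub>R c) has_integral smoothing g x *\<^sub>R c) UNIV"
    unfolding smoothing_def
    using integrable_shifted_kernel_scaleR[of "quasi_interp g" x, OF continuous_on_quasi_interp]
    by (intro has_integral_scaleR_left integrable_integral) simp
  ultimately show ?thesis
    by (simp add: wtilde_def integral_unique)
qed

lemma continuous_on_wbar: "continuous_on UNIV (wbar \<zeta> w)"
  using continuous_on_lattice_sum[of "\<lambda>\<xi> _. w \<xi>"] by (simp add: wbar_def[abs_def])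

lemma wtilde_add: "wtilde \<zeta> (\<lambda>\<xi>. v \<xi> + w \<xi>) x = wtilde \<zeta> v x + wtilde \<zeta> w x"
proof -
  have "wbar \<zeta> (\<lambda>\<xi>. v \<xi> + w \<xi>) y = wbar \<zeta> v y + wbar \<zeta> w y" for y
    unfolding wbar_def scaleR_add_right by (rule infsum_add) (rule lattice_summable)+
  then show ?thesis
    unfolding wtilde_def
    by (simp add: scaleR_add_right integral_add integrable_shifted_kernel_scaleR continuous_on_wbar)
qed

definition representable :: "(real^'d \<Rightarrow> real^'m::finite) \<Rightarrow> bool" where
  "representable p \<longleftrightarrow> (\<exists>w. \<forall>x. wtilde \<zeta> w x = p x)"

lemma representable_zero: "representable (\<lambda>_. 0)"
  unfolding representable_def by (rule exI[of _ "\<lambda>_. 0"]) (simp add: wtilde_def wbar_def)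

lemma representable_add:
  assumes "representable p" "representable q"
  shows "representable (\<lambda>x. p x + q x)"
proof -
  obtain v w where "\<forall>x. wtilde \<zeta> v x = p x" "\<forall>x. wtilde \<zeta> w x = q x"
    using assms unfolding representable_def by blast
  then show ?thesis
    unfolding representable_def by (intro exI[of _ "\<lambda>\<xi>. v \<xi> + w \<xi>"]) (simp add: wtilde_add)
qed

lemma representable_sum:
  "finite I \<Longrightarrow> (\<And>i. i \<in> I \<Longrightarrow> representable (p i)) \<Longrightarrow> representable (\<lambda>x. \<Sum>i\<in>I. p i x)"
  by (induction I rule: finite_induct) (simp_all add: representable_zero representable_add)

lemma representable_scaleR:
  assumes "\<And>x. smoothing g x = g x + (a + b \<bullet> x)"
  shows "representable (\<lambda>x. g x *\<^sub>R c)"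
proof -
  have "wtilde \<zeta> (\<lambda>\<xi>. (g (lat \<xi>) - (a + b \<bullet> lat \<xi>)) *\<^sub>R c) x = g x *\<^sub>R c" for x
    using wtilde_scaleR[of "\<lambda>y. g y - (a + b \<bullet> y)" c x]
    by (simp add: smoothing_diff smoothing_affine assms)
  then show ?thesis
    unfolding representable_def by blast
qed

lemma representable_cubic_poly:
  assumes "cubic_poly p"
  shows "representable p"
proof -
  obtain c\<^sub>0 c\<^sub>1 c\<^sub>2 c\<^sub>3 where p: "\<And>x. p x = c\<^sub>0 + (\<Sum>i\<in>UNIV. (x$i) *\<^sub>R c\<^sub>1 i)
      + (\<Sum>i\<in>UNIV. \<Sum>j\<in>UNIV. (x$i * x$j) *\<^sub>R c\<^sub>2 i j)
      + (\<Sum>i\<in>UNIV. \<Sum>j\<in>UNIV. \<Sum>k\<in>UNIV. (x$i * x$j * x$k) *\<^sub>R c\<^sub>3 i j k)"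
    using assms unfolding cubic_poly_def by blast
  have constant_term: "representable (\<lambda>x. (1::real) *\<^sub>R c\<^sub>0)"
    by (rule representable_scaleR[of _ 0 0]) (use smoothing_affine[of 1 0] in simp)
  have linear_term: "representable (\<lambda>x. x $ i *\<^sub>R c\<^sub>1 i)" for i
    by (rule representable_scaleR[of _ 0 0]) (use smoothing_affine[of 0 "axis i 1"] in \<open>simp add: inner_axis'\<close>)
  have quadratic_term: "representable (\<lambda>x. (x $ i * x $ j) *\<^sub>R c\<^sub>2 i j)" for i j
    by (rule representable_scaleR[where a = "2 * kernel_mean (\<lambda>z. z $ i * z $ j)" and b = 0])
      (simp add: smoothing_quadratic)
  have cubic_term: "representable (\<lambda>x. (x $ i * x $ j * x $ k) *\<^sub>R c\<^sub>3 i j k)" for i j k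
  proof (rule representable_scaleR)
    let ?b = "(2 * kernel_mean (\<lambda>z. z $ j * z $ k)) *\<^sub>R axis i 1
      + (2 * kernel_mean (\<lambda>z. z $ i * z $ k)) *\<^sub>R axis j 1
      + (2 * kernel_mean (\<lambda>z. z $ i * z $ j)) *\<^sub>R axis k (1::real)"
    show "smoothing (\<lambda>y. y $ i * y $ j * y $ k) x
        = x $ i * x $ j * x $ k + (- 2 * kernel_mean (\<lambda>z. z $ i * z $ j * z $ k) + ?b \<bullet> x)" for x
      unfolding smoothing_cubic by (simp add: inner_add_left inner_axis' algebra_simps)
  qed
  have "representable (\<lambda>x. (1::real) *\<^sub>R c\<^sub>0 + (\<Sum>i\<in>UNIV. (x$i) *\<^sub>R c\<^sub>1 i)
      + (\<Sum>i\<in>UNIV. \<Sum>j\<in>UNIV. (x$i * x$j) *\<^sub>R c\<^sub>2 i j)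
      + (\<Sum>i\<in>UNIV. \<Sum>j\<in>UNIV. \<Sum>k\<in>UNIV. (x$i * x$j * x$k) *\<^sub>R c\<^sub>3 i j k))"
    by (intro representable_add representable_sum constant_term linear_term quadratic_term cubic_term) simp_all
  then show ?thesis
    using p by (simp add: representable_def)
qed

end

lemma lattice_kernel_if_admissible:
  assumes "admissible_zeta \<zeta>"
  obtains R where "lattice_kernel \<zeta> R"
proof -
  have "compact (closure {x. \<zeta> x \<noteq> 0})"
    using assms unfolding admissible_zeta_def by (elim conjE)
  then have "bounded (closure {x. \<zeta> x \<noteq> 0})"
    by (rule compact_imp_bounded)
  then obtain R where R: "\<And>x. x \<in> closure {x. \<zeta> x \<noteq> 0} \<Longrightarrow> norm x \<le> R"
    unfolding bounded_iff by blast
  show ?thesis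
  proof (rule that[of R], unfold_locales)
    obtain L where "L-lipschitz_on UNIV \<zeta>"
      using assms unfolding admissible_zeta_def by blast
    then show "continuous_on UNIV \<zeta>"
      by (rule lipschitz_on_continuous_on)
    show "norm x \<le> R" if "\<zeta> x \<noteq> 0" for x
    proof (rule R)
      show "x \<in> closure {x. \<zeta> x \<noteq> 0}"
        by (rule subsetD[OF closure_subset]) (simp add: that)
    qed
    have "\<forall>x a b. (\<Sum>\<^sub>\<infinity>\<xi>. \<zeta> (x - lat \<xi>) * (a + b \<bullet> lat \<xi>)) = a + b \<bullet> x"
      using assms unfolding admissible_zeta_def by (elim conjE)
    then show "(\<Sum>\<^sub>\<infinity>\<xi>. \<zeta> (x - lat \<xi>) * (a + b \<bullet> lat \<xi>)) = a + b \<bullet> x" for x a b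
      by blast
  qed
qed

theorem lemma4p5:
  fixes \<zeta> :: "real^'d \<Rightarrow> real" and p :: "real^'d \<Rightarrow> real^'m"
  assumes "admissible_zeta \<zeta>"
    and "cubic_poly p"
  shows "\<exists>w :: ('d \<Rightarrow> int) \<Rightarrow> real^'m. \<forall>x. wtilde \<zeta> w x = p x"
proof -
  obtain R where "lattice_kernel \<zeta> R"
    using lattice_kernel_if_admissible[OF assms(1)] .
  then interpret lattice_kernel \<zeta> R .
  show ?thesis
    using representable_cubic_poly[OF assms(2)] unfolding representable_def .
qed

end
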